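(* Let $S$ be a tree and define $P_S:\mathbb N\to\mathbb N$ by $P_S(n)=sh(S,L_n)$. Then there is a polynomial with rational coefficients, of degree $|S|$ and leading coefficient $(S!)^{-1}$, whose value at every $n\in\mathbb N$ equals $P_S(n)$. Here $|S|$ is the number of vertices of $S$ and $$S!=\prod_{v\in V(S)}|S_v|,$$ where $S_v$ is the maximal subtree of $S$ having $v$ as its root vertex and $|S_v|$ its number of vertices.
   Context: A tree is a finite connected graph without cycles whose external edges are open. One external edge is the root; the others are leaves. Each vertex has one outgoing edge (towards the root) and a strictly positive number of incoming edges. No planar structure. $V(S)$ is the vertex set. For a vertex $v$, $S_v$ consists of the outgoing edge of $v$ together with all edges above it. $L_n$ denotes the linear tree with $n$ vertices, all of valence $1$ ($L_0=\eta$, the tree with one edge and no vertices). Shuffle: for trees $S,T$ with root edges $r_S,r_T$, a shuffle is a tree $A$ with edges labelled by pairs $(s,t)\in E(S)\times E(T)$ such that: (1) the root of $A$ is labelled $(r_S,r_T)$; (2) the labelling restricts to a bijection from leaves of $A$ onto $\mathrm{Leaves}(S)\times\mathrm{Leaves}(T)$; (3) if an edge labelled $(s,t)$ is not a leaf, the incoming edges of the vertex of $A$ above it are labelled either exactly $(s_1,t),\dots,(s_m,t)$ for $s_1,\dots,s_m$ the edges immediately above $s$ in $S$, or exactly $(s,t_1),\dots,(s,t_n)$ for $t_1,\dots,t_n$ the edges immediately above $t$ in $T$. Shuffles are taken up to isomorphism of labelled trees; $sh(S,T)$ is their number. *)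

theory Defs
  imports "HOL-Library.Multiset" "HOL-Computational_Algebra.Polynomial"
begin

text \<open>A (non-planar) tree is given by a planar representative: every node of the
  datatype below is an EDGE; its list of children are the edges immediately above it
  (the incoming edges of the vertex on top of it).  An edge with no children is a leaf,
  an edge with a nonempty list of children is the outgoing edge of a vertex.  The root
  edge is the top node.  Edges are addressed by paths (nat lists), the root being [].\<close>

datatype ptree = Nd "ptree list"

fun children :: "ptree \<Rightarrow> ptree list" where
  "children (Nd ts) = ts"

function subtr :: "ptree \<Rightarrow> nat list \<Rightarrow> ptree" where
  "subtr t [] = t"
| "subtr (Nd ts) (i # p) = subtr (ts ! i) p"
  by pat_completeness auto
termination by (relation "measure (\<lambda>(t, p). length p)") auto

fun valid :: "ptree \<Rightarrow> nat list \<Rightarrow> bool" where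
  "valid t [] = True"
| "valid (Nd ts) (i # p) = (i < length ts \<and> valid (ts ! i) p)"

definition edges :: "ptree \<Rightarrow> nat list set" where
  "edges S = {p. valid S p}"

definition above :: "ptree \<Rightarrow> nat list \<Rightarrow> nat list list" where
  "above S p = map (\<lambda>i. p @ [i]) [0..<length (children (subtr S p))]"

definition leaves :: "ptree \<Rightarrow> nat list set" where
  "leaves S = {p \<in> edges S. children (subtr S p) = []}"

fun nverts :: "ptree \<Rightarrow> nat" where
  "nverts (Nd ts) = (if ts = [] then 0 else 1 + sum_list (map nverts ts))"

fun tfact :: "ptree \<Rightarrow> nat" where
  "tfact (Nd ts) = (if ts = [] then 1 else nverts (Nd ts) * prod_list (map tfact ts))"

fun lin :: "nat \<Rightarrow> ptree" where
  "lin 0 = Nd []"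
| "lin (Suc n) = Nd [lin n]"

text \<open>Edge-labelled non-planar trees (isomorphism classes): each node is an edge with
  its label and the multiset of edges immediately above it.\<close>
datatype 'a ltree = LN 'a "'a ltree multiset"

lemma size_mset_mem [termination_simp]:
  "z \<in># M \<Longrightarrow> size z < Suc (size_multiset size M)"
proof -
  assume "z \<in># M"
  then obtain N where "M = add_mset z N" by (blast dest: multi_member_split)
  then show ?thesis by simp
qed

fun lab :: "'a ltree \<Rightarrow> 'a" where
  "lab (LN a M) = a"

fun leaf_labels :: "'a ltree \<Rightarrow> 'a multiset" where
  "leaf_labels (LN a M) = (if M = {#} then {#a#} else sum_mset (image_mset leaf_labels M))"

fun shuf_ok :: "ptree \<Rightarrow> ptree \<Rightarrow> (nat list \<times> nat list) ltree \<Rightarrow> bool" where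
  "shuf_ok S T (LN (s, t) M) =
     ((M = {#} \<or>
       image_mset lab M = mset (map (\<lambda>s'. (s', t)) (above S s)) \<or>
       image_mset lab M = mset (map (\<lambda>t'. (s, t')) (above T t)))
      \<and> (\<forall>A \<in># M. shuf_ok S T A))"

definition is_shuffle :: "ptree \<Rightarrow> ptree \<Rightarrow> (nat list \<times> nat list) ltree \<Rightarrow> bool" where
  "is_shuffle S T A \<longleftrightarrow>
     lab A = ([], []) \<and>
     leaf_labels A = mset_set (leaves S \<times> leaves T) \<and>
     shuf_ok S T A"

definition sh :: "ptree \<Rightarrow> ptree \<Rightarrow> nat" where
  "sh S T = card {A. is_shuffle S T A}"

end

theory Submission
  imports Defs "HOL-Library.FuncSet" "HOL-Library.Disjoint_Sets"
begin

text \<open>A shuffle of \<open>S\<close> with \<open>L\<^sub>n\<close> begins with \<open>n - j\<close> vertices of \<open>L\<^sub>n\<close>, then uses the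
  root vertex of \<open>S\<close>, and continues above it with independent shuffles of the subtrees
  \<open>S\<^sub>1, \<dots>, S\<^sub>k\<close> above the root vertex with \<open>L\<^sub>j\<close>. Hence
  \<open>P\<^sub>S(n) = (\<Sum>j\<le>n. \<Prod>i. P\<^bsub>S\<^sub>i\<^esub>(j))\<close>. By induction the product is a polynomial in \<open>j\<close> of
  degree \<open>|S| - 1\<close> with leading coefficient \<open>1 / \<Prod>i. S\<^sub>i!\<close>, and summing a polynomial of
  degree \<open>d\<close> over \<open>j \<le> n\<close> gives a polynomial in \<open>n\<close> of degree \<open>d + 1\<close> whose leading
  coefficient is divided by \<open>d + 1 = |S|\<close>.

  The decomposition is an instance of a recursion valid for any two trees: a shuffle rooted
  at a pair of edges \<open>(s, t)\<close> is a vertex taken from \<open>S\<close> or from \<open>T\<close>, followed by a forest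
  of shuffles rooted at the resulting pairs of edges. The leaves are distributed among the
  trees of the forest because the pairs of edges above different roots are disjoint.\<close>

abbreviation children_at :: "ptree \<Rightarrow> nat list \<Rightarrow> ptree list" where
  "children_at S p \<equiv> children (subtr S p)"

lemma subtr_append: "subtr S (p @ q) = subtr (subtr S p) q"
  by (induction S p rule: subtr.induct) auto

lemma valid_append: "valid S (p @ q) \<longleftrightarrow> valid S p \<and> valid (subtr S p) q"
  by (induction S p rule: subtr.induct) auto

lemma valid_snoc: "valid S (p @ [i]) \<longleftrightarrow> valid S p \<and> i < length (children_at S p)"
  by (cases "subtr S p") (simp add: valid_append)

lemma subtr_snoc:
  "i < length (children_at S p) \<Longrightarrow> subtr S (p @ [i]) = children_at S p ! i"
  by (cases "subtr S p") (simp add: subtr_append)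

lemma size_subtr_snoc:
  assumes "i < length (children_at S p)"
  shows "size (subtr S (p @ [i])) < size (subtr S p)"
proof (cases "subtr S p")
  case (Nd ts)
  then have "subtr S (p @ [i]) \<in> set ts"
    using assms by (simp add: subtr_snoc)
  with Nd show ?thesis
    by (auto intro: size_list_estimation' simp: less_Suc_eq_le)
qed

lemma finite_edges: "finite (edges S)"
proof (induction S)
  case (Nd ts)
  have "edges (Nd ts) \<subseteq> insert [] (\<Union>i<length ts. (#) i ` edges (ts ! i))"
  proof
    fix p assume "p \<in> edges (Nd ts)"
    then show "p \<in> insert [] (\<Union>i<length ts. (#) i ` edges (ts ! i))"
      by (cases p) (auto simp: edges_def)
  qed
  then show ?case
    by (rule finite_subset) (use Nd in auto)
qed

definition leaves_below :: "ptree \<Rightarrow> nat list \<Rightarrow> nat list set" where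
  "leaves_below S s = {p \<in> leaves S. \<exists>q. p = s @ q}"

lemma finite_leaves_below: "finite (leaves_below S s)"
  using finite_edges[of S] by (rule finite_subset[rotated]) (auto simp: leaves_below_def leaves_def)

lemma leaves_below_Nil: "leaves_below S [] = leaves S"
  by (simp add: leaves_below_def)

lemma leaves_below_leaf:
  assumes "valid S s" "children_at S s = []"
  shows "leaves_below S s = {s}"
proof -
  have "subtr S s = Nd []"
    using assms(2) by (cases "subtr S s") simp
  moreover have "valid (Nd []) q \<Longrightarrow> q = []" for q
    by (cases q) simp_all
  ultimately show ?thesis
    using assms by (auto simp: leaves_below_def leaves_def edges_def valid_append)
qed

lemma leaves_below_node:
  assumes "valid S s" "children_at S s \<noteq> []"
  shows "leaves_below S s = (\<Union>i<length (children_at S s). leaves_below S (s @ [i]))"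
proof (intro equalityI subsetI)
  fix p assume "p \<in> leaves_below S s"
  then obtain q where q: "p = s @ q" "valid S p" "children_at S p = []"
    by (auto simp: leaves_below_def leaves_def edges_def)
  with assms(2) obtain i q' where "q = i # q'"
    by (cases q) auto
  with q have "i < length (children_at S s)" "p = (s @ [i]) @ q'"
    by (cases "subtr S s"; simp add: valid_append)+
  with q show "p \<in> (\<Union>i<length (children_at S s). leaves_below S (s @ [i]))"
    by (auto simp: leaves_below_def leaves_def edges_def)
qed (auto simp: leaves_below_def)

lemma image_mset_eq_mset_setE:
  assumes "finite I" "image_mset f M = mset_set I"
  obtains h where "M = image_mset h (mset_set I)" "\<And>l. l \<in> I \<Longrightarrow> f (h l) = l"
proof -
  have "\<exists>h. M = image_mset h (mset_set I) \<and> (\<forall>l\<in>I. f (h l) = l)"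
    using assms
  proof (induction I arbitrary: M rule: finite_induct)
    case empty
    then show ?case by simp
  next
    case (insert l I)
    then have "l \<in># image_mset f M" by simp
    then obtain A M' where M: "M = add_mset A M'" and "f A = l"
      by (auto dest: multi_member_split)
    with insert have "image_mset f M' = mset_set I" by simp
    with insert.IH obtain h where h: "M' = image_mset h (mset_set I)" "\<forall>l\<in>I. f (h l) = l"
      by blast
    have "image_mset (h(l := A)) (mset_set I) = image_mset h (mset_set I)"
      using insert.hyps by (intro image_mset_cong) auto
    with M h \<open>f A = l\<close> insert.hyps show ?case
      by (intro exI[of _ "h(l := A)"]) (simp del: fun_upd_apply, simp)
  qed
  then show ?thesis using that by blast
qed

lemma mset_set_UN_disjoint:
  assumes "finite I" "\<And>i. i \<in> I \<Longrightarrow> finite (F i)" "disjoint_family_on F I"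
  shows "mset_set (\<Union>i\<in>I. F i) = (\<Sum>i\<in>I. mset_set (F i))"
  using assms
proof (induction I rule: finite_induct)
  case (insert i I)
  then have "F i \<inter> (\<Union>i\<in>I. F i) = {}" "disjoint_family_on F I"
    by (simp_all add: disjoint_family_on_insert)
  with insert show ?case
    by (simp add: mset_set_Union)
qed simp

lemma sum_eq_mset_set_UN_component:
  assumes "finite I" "(\<Sum>i\<in>I. X i) = mset_set (\<Union>i\<in>I. F i)" "disjoint_family_on D I"
    and "\<And>i. i \<in> I \<Longrightarrow> set_mset (X i) \<subseteq> D i"
    and "\<And>i. i \<in> I \<Longrightarrow> F i \<subseteq> D i" "\<And>i. i \<in> I \<Longrightarrow> finite (F i)" "j \<in> I"
  shows "X j = mset_set (F j)"
proof (rule multiset_eqI)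
  fix x
  show "count (X j) x = count (mset_set (F j)) x"
  proof (cases "x \<in> D j")
    case True
    have "x \<notin># X i" "x \<notin> F i" if "i \<in> I" "i \<noteq> j" for i
      using assms(3-5) assms(7) True that unfolding disjoint_family_on_def by blast+
    then have "count (X j) x = (\<Sum>i\<in>I. count (X i) x)"
      "x \<in> (\<Union>i\<in>I. F i) \<longleftrightarrow> x \<in> F j"
      using assms(1,7) by (auto simp: sum.remove not_in_iff intro!: sum.neutral)
    with assms show ?thesis
      by (simp add: count_sum[symmetric] count_mset_set')
  next
    case False
    with assms(4,5,7) show ?thesis
      by (auto simp: not_in_iff[symmetric] count_mset_set')
  qed
qed

definition descendants :: "nat list \<times> nat list \<Rightarrow> (nat list \<times> nat list) set" where
  "descendants l = {(fst l @ a, snd l @ b) | a b. True}"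

lemma descendants_trans: "l' \<in> descendants l \<Longrightarrow> descendants l' \<subseteq> descendants l"
  by (auto simp: descendants_def)

definition S_children :: "ptree \<Rightarrow> nat list \<Rightarrow> nat list \<Rightarrow> (nat list \<times> nat list) set" where
  "S_children S s t = (\<lambda>s'. (s', t)) ` set (above S s)"

definition T_children :: "ptree \<Rightarrow> nat list \<Rightarrow> nat list \<Rightarrow> (nat list \<times> nat list) set" where
  "T_children T s t = (\<lambda>t'. (s, t')) ` set (above T t)"

lemma S_children_eq: "S_children S s t = (\<lambda>i. (s @ [i], t)) ` {..<length (children_at S s)}"
  by (auto simp: S_children_def above_def)

lemma T_children_eq: "T_children T s t = (\<lambda>i. (s, t @ [i])) ` {..<length (children_at T t)}"
  by (auto simp: T_children_def above_def)

lemma shuf_ok_LN: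
  "shuf_ok S T (LN (s, t) M) \<longleftrightarrow>
     (M = {#} \<or> image_mset lab M = mset_set (S_children S s t) \<or>
      image_mset lab M = mset_set (T_children T s t)) \<and> (\<forall>A\<in>#M. shuf_ok S T A)"
proof -
  have mset_above: "mset (map f (above R p)) = mset_set (f ` set (above R p))" if "inj f" for f R p
  proof -
    have "distinct (map f (above R p))"
      using that by (auto simp: above_def distinct_map inj_on_def inj_def)
    then show ?thesis
      by (metis mset_set_set set_map)
  qed
  have "mset (map (\<lambda>s'. (s', t)) (above S s)) = mset_set (S_children S s t)"
    "mset (map (\<lambda>t'. (s, t')) (above T t)) = mset_set (T_children T s t)"
    unfolding S_children_def T_children_def by (rule mset_above; simp add: inj_def)+
  then show ?thesis
    by (simp only: shuf_ok.simps)
qed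

lemma finite_children: "finite (S_children S s t)" "finite (T_children T s t)"
  by (simp_all add: S_children_def T_children_def)

lemma children_subset_descendants:
  "S_children S s t \<subseteq> descendants (s, t)" "T_children T s t \<subseteq> descendants (s, t)"
  by (auto simp: S_children_eq T_children_eq descendants_def)

lemma leaf_labels_subset_descendants:
  "shuf_ok S T A \<Longrightarrow> set_mset (leaf_labels A) \<subseteq> descendants (lab A)"
proof (induction S T A rule: shuf_ok.induct)
  case (1 S T s t M)
  show ?case
  proof (cases "M = {#}")
    case True
    then show ?thesis by (auto simp: descendants_def)
  next
    case False
    have "lab A \<in> descendants (s, t)" if "A \<in># M" for A
    proof -
      have "lab A \<in># image_mset lab M"
        using that by simp
      moreover have "image_mset lab M = mset_set (S_children S s t) \<or>
          image_mset lab M = mset_set (T_children T s t)"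
        using "1.prems" False shuf_ok_LN by blast
      ultimately have "lab A \<in> S_children S s t \<union> T_children T s t"
        using finite_children by (metis Un_iff elem_mset_set)
      then show ?thesis
        using children_subset_descendants by blast
    qed
    with "1.IH" "1.prems" False show ?thesis
      by (fastforce dest: descendants_trans)
  qed
qed

definition leaf_pairs :: "ptree \<Rightarrow> ptree \<Rightarrow> nat list \<times> nat list \<Rightarrow> (nat list \<times> nat list) set" where
  "leaf_pairs S T l = leaves_below S (fst l) \<times> leaves_below T (snd l)"

lemma finite_leaf_pairs: "finite (leaf_pairs S T l)"
  by (simp add: leaf_pairs_def finite_leaves_below)

lemma leaf_pairs_subset_descendants: "leaf_pairs S T l \<subseteq> descendants l"
  by (auto simp: leaf_pairs_def leaves_below_def descendants_def)

text \<open>Shuffles of the subtrees \<open>S\<^sub>s\<close> and \<open>T\<^sub>t\<close>, their edges labelled by their addresses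
  in \<open>S\<close> and \<open>T\<close>.\<close>
definition shuffles_at :: "ptree \<Rightarrow> ptree \<Rightarrow> nat list \<times> nat list \<Rightarrow> (nat list \<times> nat list) ltree set" where
  "shuffles_at S T l =
     {A. lab A = l \<and> leaf_labels A = mset_set (leaf_pairs S T l) \<and> shuf_ok S T A}"

lemma sh_eq_card_shuffles_at: "sh S T = card (shuffles_at S T ([], []))"
  by (simp add: sh_def shuffles_at_def is_shuffle_def leaf_pairs_def leaves_below_Nil)

definition forests :: "ptree \<Rightarrow> ptree \<Rightarrow> (nat list \<times> nat list) set \<Rightarrow>
    (nat list \<times> nat list) ltree multiset set" where
  "forests S T I =
     {M. image_mset lab M = mset_set I \<and> (\<forall>A\<in>#M. A \<in> shuffles_at S T (lab A))}"

lemma bij_betw_forests: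
  assumes "finite I"
  shows "bij_betw (\<lambda>h. image_mset h (mset_set I)) (Pi\<^sub>E I (shuffles_at S T)) (forests S T I)"
proof -
  have lab_h: "lab (h l) = l" if "h \<in> Pi\<^sub>E I (shuffles_at S T)" "l \<in> I" for h l
    using that by (auto simp: shuffles_at_def)
  show ?thesis
  proof (rule bij_betwI')
    fix h1 h2 assume h: "h1 \<in> Pi\<^sub>E I (shuffles_at S T)" "h2 \<in> Pi\<^sub>E I (shuffles_at S T)"
    show "image_mset h1 (mset_set I) = image_mset h2 (mset_set I) \<longleftrightarrow> h1 = h2"
    proof
      assume eq: "image_mset h1 (mset_set I) = image_mset h2 (mset_set I)"
      show "h1 = h2"
      proof (rule PiE_ext[OF h])
        fix l assume "l \<in> I"
        then have "h1 l \<in># image_mset h2 (mset_set I)"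
          using assms by (simp flip: eq)
        then obtain l' where "l' \<in> I" "h1 l = h2 l'"
          using assms by auto
        with \<open>l \<in> I\<close> lab_h h show "h1 l = h2 l"
          by metis
      qed
    qed simp
  next
    fix h assume h: "h \<in> Pi\<^sub>E I (shuffles_at S T)"
    then have "image_mset (lab \<circ> h) (mset_set I) = image_mset id (mset_set I)"
      using assms lab_h by (intro image_mset_cong) auto
    then have "image_mset lab (image_mset h (mset_set I)) = mset_set I"
      by (simp add: multiset.map_comp)
    moreover have "h l \<in> shuffles_at S T (lab (h l))" if "l \<in> I" for l
      using h lab_h[OF h that] that by auto
    ultimately show "image_mset h (mset_set I) \<in> forests S T I"
      using assms by (auto simp: forests_def)
  next
    fix M assume "M \<in> forests S T I"
    then obtain h where h: "M = image_mset h (mset_set I)" "\<And>l. l \<in> I \<Longrightarrow> lab (h l) = l"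
      "\<forall>A\<in>#M. A \<in> shuffles_at S T (lab A)"
      using image_mset_eq_mset_setE[OF assms] unfolding forests_def by blast
    then have "restrict h I \<in> Pi\<^sub>E I (shuffles_at S T)"
      using assms by auto
    moreover have "M = image_mset (restrict h I) (mset_set I)"
      using h(1) assms by (auto intro: image_mset_cong)
    ultimately show "\<exists>h\<in>Pi\<^sub>E I (shuffles_at S T). M = image_mset h (mset_set I)"
      by blast
  qed
qed

lemma finite_forests:
  assumes "finite I" "\<And>l. l \<in> I \<Longrightarrow> finite (shuffles_at S T l)"
  shows "finite (forests S T I)"
proof -
  have "finite (Pi\<^sub>E I (shuffles_at S T))"
    using assms by (intro finite_PiE)
  then show ?thesis
    using bij_betw_finite[OF bij_betw_forests[OF assms(1)]] by blast
qed

lemma card_forests: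
  assumes "finite I"
  shows "card (forests S T I) = (\<Prod>l\<in>I. card (shuffles_at S T l))"
  using bij_betw_same_card[OF bij_betw_forests[OF assms]] assms by (simp add: card_PiE)

lemma disjoint_family_on_leaf_pairs:
  "disjoint_family_on descendants I \<Longrightarrow> disjoint_family_on (leaf_pairs S T) I"
  using leaf_pairs_subset_descendants unfolding disjoint_family_on_def by blast

lemma leaf_labels_forest:
  assumes "finite I" "disjoint_family_on descendants I" "M \<in> forests S T I"
  shows "(\<Sum>A\<in>#M. leaf_labels A) = mset_set (\<Union>l\<in>I. leaf_pairs S T l)"
proof -
  obtain h where h: "M = image_mset h (mset_set I)" "\<And>l. l \<in> I \<Longrightarrow> lab (h l) = l"
    using image_mset_eq_mset_setE[OF assms(1)] assms(3) unfolding forests_def by blast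
  have "leaf_labels (h l) = mset_set (leaf_pairs S T l)" if "l \<in> I" for l
  proof -
    have "h l \<in># M"
      using assms(1) h(1) that by simp
    then have "h l \<in> shuffles_at S T l"
      using assms(3) h(2) that unfolding forests_def by fastforce
    then show ?thesis
      by (simp add: shuffles_at_def)
  qed
  then have "(\<Sum>l\<in>I. leaf_labels (h l)) = (\<Sum>l\<in>I. mset_set (leaf_pairs S T l))"
    by (rule sum.cong[OF refl])
  moreover have "(\<Sum>A\<in>#M. leaf_labels A) = (\<Sum>l\<in>I. leaf_labels (h l))"
    by (simp add: h(1) sum_unfold_sum_mset multiset.map_comp comp_def)
  ultimately have "(\<Sum>A\<in>#M. leaf_labels A) = (\<Sum>l\<in>I. mset_set (leaf_pairs S T l))"
    by simp
  also have "\<dots> = mset_set (\<Union>l\<in>I. leaf_pairs S T l)"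
    using assms(1,2) by (simp add: mset_set_UN_disjoint finite_leaf_pairs disjoint_family_on_leaf_pairs)
  finally show ?thesis .
qed

lemma forest_if_leaf_labels:
  assumes "finite I" "disjoint_family_on descendants I" "image_mset lab M = mset_set I"
    and "\<forall>A\<in>#M. shuf_ok S T A" "(\<Sum>A\<in>#M. leaf_labels A) = mset_set (\<Union>l\<in>I. leaf_pairs S T l)"
  shows "M \<in> forests S T I"
proof -
  obtain h where h: "M = image_mset h (mset_set I)" "\<And>l. l \<in> I \<Longrightarrow> lab (h l) = l"
    using image_mset_eq_mset_setE[OF assms(1,3)] by blast
  have shuf_ok_h: "shuf_ok S T (h l)" if "l \<in> I" for l
    using assms(1,4) h(1) that by simp
  have sum_leaf_labels: "(\<Sum>l\<in>I. leaf_labels (h l)) = mset_set (\<Union>l\<in>I. leaf_pairs S T l)"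
    using assms(5) by (simp add: h(1) sum_unfold_sum_mset multiset.map_comp comp_def)
  have "leaf_labels (h l) = mset_set (leaf_pairs S T l)" if "l \<in> I" for l
    using assms(1) sum_leaf_labels assms(2)
  proof (rule sum_eq_mset_set_UN_component)
    show "set_mset (leaf_labels (h l)) \<subseteq> descendants l" if "l \<in> I" for l
      using leaf_labels_subset_descendants[OF shuf_ok_h] h(2) that by metis
  qed (simp_all add: leaf_pairs_subset_descendants finite_leaf_pairs that)
  with assms(1,3) h shuf_ok_h show ?thesis
    by (auto simp: forests_def shuffles_at_def)
qed

lemma LN_in_shuffles_at_iff:
  assumes "finite I" "I \<noteq> {}" "disjoint_family_on descendants I"
    and "(\<Union>l\<in>I. leaf_pairs S T l) = leaf_pairs S T (s, t)"
    and "I = S_children S s t \<or> I = T_children T s t" "image_mset lab M = mset_set I"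
  shows "LN (s, t) M \<in> shuffles_at S T (s, t) \<longleftrightarrow> M \<in> forests S T I"
proof -
  have "M \<noteq> {#}"
    using assms(1,2,6) by (metis image_mset_is_empty_iff mset_set_empty_iff)
  then have leaf_labels_LN: "leaf_labels (LN (s, t) M) = (\<Sum>A\<in>#M. leaf_labels A)"
    by simp
  have shuf_ok_iff: "shuf_ok S T (LN (s, t) M) \<longleftrightarrow> (\<forall>A\<in>#M. shuf_ok S T A)"
    unfolding shuf_ok_LN using assms(5,6) by auto
  show ?thesis
  proof
    assume "LN (s, t) M \<in> shuffles_at S T (s, t)"
    then have "\<forall>A\<in>#M. shuf_ok S T A"
      "(\<Sum>A\<in>#M. leaf_labels A) = mset_set (\<Union>l\<in>I. leaf_pairs S T l)"
      unfolding shuffles_at_def using leaf_labels_LN shuf_ok_iff assms(4)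
      by (simp_all del: leaf_labels.simps shuf_ok.simps)
    then show "M \<in> forests S T I"
      using forest_if_leaf_labels assms(1,3,6) by blast
  next
    assume M: "M \<in> forests S T I"
    then have "\<forall>A\<in>#M. shuf_ok S T A"
      by (auto simp: forests_def shuffles_at_def)
    with M show "LN (s, t) M \<in> shuffles_at S T (s, t)"
      unfolding shuffles_at_def using leaf_labels_LN shuf_ok_iff assms(4)
        leaf_labels_forest[OF assms(1,3) M]
      by (simp del: leaf_labels.simps shuf_ok.simps)
  qed
qed

lemma S_children_props:
  assumes "valid S s" "children_at S s \<noteq> []"
  shows "S_children S s t \<noteq> {}" "disjoint_family_on descendants (S_children S s t)"
    "(\<Union>l\<in>S_children S s t. leaf_pairs S T l) = leaf_pairs S T (s, t)"
  using assms leaves_below_node[OF assms]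
  by (auto simp: S_children_eq disjoint_family_on_def descendants_def leaf_pairs_def)

lemma T_children_props:
  assumes "valid T t" "children_at T t \<noteq> []"
  shows "T_children T s t \<noteq> {}" "disjoint_family_on descendants (T_children T s t)"
    "(\<Union>l\<in>T_children T s t. leaf_pairs S T l) = leaf_pairs S T (s, t)"
  using assms leaves_below_node[OF assms]
  by (auto simp: T_children_eq disjoint_family_on_def descendants_def leaf_pairs_def)

lemma LN_in_shuffles_at_S_iff:
  assumes "valid S s" "children_at S s \<noteq> []" "image_mset lab M = mset_set (S_children S s t)"
  shows "LN (s, t) M \<in> shuffles_at S T (s, t) \<longleftrightarrow> M \<in> forests S T (S_children S s t)"
  by (rule LN_in_shuffles_at_iff) (use assms finite_children S_children_props in auto)

lemma LN_in_shuffles_at_T_iff: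
  assumes "valid T t" "children_at T t \<noteq> []" "image_mset lab M = mset_set (T_children T s t)"
  shows "LN (s, t) M \<in> shuffles_at S T (s, t) \<longleftrightarrow> M \<in> forests S T (T_children T s t)"
  by (rule LN_in_shuffles_at_iff) (use assms finite_children T_children_props in auto)

lemma LN_empty_in_shuffles_at_iff:
  assumes "valid S s" "valid T t"
  shows "LN (s, t) {#} \<in> shuffles_at S T (s, t) \<longleftrightarrow> children_at S s = [] \<and> children_at T t = []"
proof
  assume "LN (s, t) {#} \<in> shuffles_at S T (s, t)"
  then have "{#(s, t)#} = mset_set (leaf_pairs S T (s, t))"
    by (simp add: shuffles_at_def)
  then have "(s, t) \<in> leaf_pairs S T (s, t)"
    by (metis finite_leaf_pairs elem_mset_set union_single_eq_member)
  then show "children_at S s = [] \<and> children_at T t = []"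
    by (simp add: leaf_pairs_def leaves_below_def leaves_def)
next
  assume "children_at S s = [] \<and> children_at T t = []"
  with assms show "LN (s, t) {#} \<in> shuffles_at S T (s, t)"
    by (simp add: shuffles_at_def leaf_pairs_def leaves_below_leaf)
qed

lemma shuffles_at_eq:
  assumes "valid S s" "valid T t"
  shows "shuffles_at S T (s, t) =
     (if children_at S s = [] \<and> children_at T t = [] then {LN (s, t) {#}} else {})
     \<union> (if children_at S s = [] then {} else LN (s, t) ` forests S T (S_children S s t))
     \<union> (if children_at T t = [] then {} else LN (s, t) ` forests S T (T_children T s t))"
    (is "_ = ?R")
proof (intro equalityI subsetI)
  fix A assume A: "A \<in> shuffles_at S T (s, t)"
  then obtain M where A_eq: "A = LN (s, t) M"
    by (cases A) (simp add: shuffles_at_def)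
  with A have "M = {#} \<or> image_mset lab M = mset_set (S_children S s t) \<or>
      image_mset lab M = mset_set (T_children T s t)"
    by (simp add: shuffles_at_def shuf_ok_LN del: shuf_ok.simps)
  then consider "M = {#}"
    | "M \<noteq> {#}" "image_mset lab M = mset_set (S_children S s t)"
    | "M \<noteq> {#}" "image_mset lab M = mset_set (T_children T s t)"
    by blast
  then show "A \<in> ?R"
  proof cases
    case 1
    with A A_eq assms show ?thesis
      by (simp add: LN_empty_in_shuffles_at_iff)
  next
    case 2
    then have "children_at S s \<noteq> []"
      by (auto simp: S_children_eq)
    with 2 A A_eq assms show ?thesis
      by (simp add: LN_in_shuffles_at_S_iff)
  next
    case 3
    then have "children_at T t \<noteq> []"
      by (auto simp: T_children_eq)
    with 3 A A_eq assms show ?thesis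
      by (simp add: LN_in_shuffles_at_T_iff)
  qed
next
  fix A assume "A \<in> ?R"
  with assms show "A \<in> shuffles_at S T (s, t)"
    by (auto simp: LN_empty_in_shuffles_at_iff LN_in_shuffles_at_S_iff LN_in_shuffles_at_T_iff
        forests_def split: if_splits)
qed

lemma finite_shuffles_at:
  "valid S s \<Longrightarrow> valid T t \<Longrightarrow> finite (shuffles_at S T (s, t))"
proof (induction "size (subtr S s) + size (subtr T t)" arbitrary: s t rule: less_induct)
  case less
  have "finite (shuffles_at S T (s @ [i], t))" if "i < length (children_at S s)" for i
    using less.hyps[of "s @ [i]" t] size_subtr_snoc[OF that] less.prems that
    by (simp add: valid_snoc)
  moreover have "finite (shuffles_at S T (s, t @ [i]))" if "i < length (children_at T t)" for i
    using less.hyps[of s "t @ [i]"] size_subtr_snoc[OF that] less.prems that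
    by (simp add: valid_snoc)
  ultimately show ?case
    using less.prems
    by (auto simp: shuffles_at_eq finite_children S_children_eq T_children_eq intro!: finite_forests)
qed

lemma forests_disjoint:
  "finite I \<Longrightarrow> finite J \<Longrightarrow> I \<noteq> J \<Longrightarrow> forests S T I \<inter> forests S T J = {}"
  by (auto simp: forests_def dest: arg_cong[where f = set_mset])

lemma card_shuffles_at:
  assumes "valid S s" "valid T t"
  shows "card (shuffles_at S T (s, t)) =
     (if children_at S s = [] \<and> children_at T t = [] then 1 else 0)
     + (if children_at S s = [] then 0 else \<Prod>l\<in>S_children S s t. card (shuffles_at S T l))
     + (if children_at T t = [] then 0 else \<Prod>l\<in>T_children T s t. card (shuffles_at S T l))"
proof -
  define X1 where "X1 = (if children_at S s = [] \<and> children_at T t = [] then {LN (s, t) {#}} else {})"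
  define X2 where "X2 = (if children_at S s = [] then {} else LN (s, t) ` forests S T (S_children S s t))"
  define X3 where "X3 = (if children_at T t = [] then {} else LN (s, t) ` forests S T (T_children T s t))"
  have shuffles_at: "shuffles_at S T (s, t) = X1 \<union> X2 \<union> X3"
    unfolding X1_def X2_def X3_def using assms by (rule shuffles_at_eq)
  then have "finite X1" "finite X2" "finite X3"
    using finite_shuffles_at[OF assms] by auto
  moreover have "X2 \<inter> X3 = {}"
  proof (cases "children_at S s = [] \<or> children_at T t = []")
    case False
    then have "S_children S s t \<noteq> T_children T s t"
      by (force simp: S_children_eq T_children_eq)
    then have "forests S T (S_children S s t) \<inter> forests S T (T_children T s t) = {}"
      by (simp add: forests_disjoint finite_children)
    then show ?thesis
      by (auto simp: X2_def X3_def)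
  qed (auto simp: X2_def X3_def)
  moreover have "X1 \<inter> X2 = {}" "X1 \<inter> X3 = {}"
    by (simp_all add: X1_def X2_def X3_def)
  moreover have "card (LN (s, t) ` X) = card X" for X
    by (simp add: card_image inj_on_def)
  ultimately show ?thesis
    by (simp add: shuffles_at card_Un_disjoint Int_Un_distrib2)
      (simp add: X1_def X2_def X3_def card_forests finite_children)
qed

text \<open>The number of shuffles with \<open>L\<^sub>m\<close>: \<open>j\<close> counts the vertices of \<open>L\<^sub>m\<close> lying above the
  vertex of the shuffle that comes from the root vertex.\<close>
fun lin_shuffle_count :: "ptree \<Rightarrow> nat \<Rightarrow> nat" where
  "lin_shuffle_count (Nd ts) m =
     (if ts = [] then 1 else \<Sum>j\<le>m. \<Prod>t\<leftarrow>ts. lin_shuffle_count t j)"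

lemma lin_shuffle_count_Nd:
  "lin_shuffle_count (Nd ts) m =
     (if ts = [] \<and> m = 0 then 1 else 0)
     + (if ts = [] then 0 else \<Prod>t\<leftarrow>ts. lin_shuffle_count t m)
     + (if m = 0 then 0 else lin_shuffle_count (Nd ts) (m - 1))"
  by (cases m) simp_all

lemma subtr_valid_lin:
  "k \<le> n \<Longrightarrow> subtr (lin n) (replicate k 0) = lin (n - k) \<and> valid (lin n) (replicate k 0)"
proof (induction k arbitrary: n)
  case (Suc k)
  then show ?case by (cases n) simp_all
qed simp

lemma children_at_lin:
  assumes "k \<le> n"
  shows "children_at (lin n) (replicate k 0) = (if k = n then [] else [lin (n - Suc k)])"
proof (cases "k = n")
  case False
  with assms have "n - k = Suc (n - Suc k)"
    by simp
  with subtr_valid_lin[OF assms] False show ?thesis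
    by simp
qed (simp add: subtr_valid_lin)

lemma T_children_lin:
  "k < n \<Longrightarrow> T_children (lin n) s (replicate k 0) = {(s, replicate (Suc k) 0)}"
  by (simp add: T_children_eq children_at_lin lessThan_Suc replicate_append_same)

lemma card_shuffles_at_lin:
  assumes "valid S s" "k \<le> n"
  shows "card (shuffles_at S (lin n) (s, replicate k 0)) = lin_shuffle_count (subtr S s) (n - k)"
  using assms
proof (induction "size (subtr S s) + (n - k)" arbitrary: s k rule: less_induct)
  case less
  obtain ts where ts: "subtr S s = Nd ts"
    by (cases "subtr S s")
  have "card (shuffles_at S (lin n) (s @ [i], replicate k 0)) = lin_shuffle_count (ts ! i) (n - k)"
    if "i < length ts" for i
    using less.hyps[of "s @ [i]" k] size_subtr_snoc[of i S s] subtr_snoc[of i S s] less.prems that ts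
    by (simp add: valid_snoc)
  then have S_factor: "(\<Prod>l\<in>S_children S s (replicate k 0). card (shuffles_at S (lin n) l))
      = (\<Prod>t\<leftarrow>ts. lin_shuffle_count t (n - k))"
    by (simp add: S_children_eq ts prod.reindex inj_on_def prod.list_conv_set_nth atLeast0LessThan)
  have T_factor: "(\<Prod>l\<in>T_children (lin n) s (replicate k 0). card (shuffles_at S (lin n) l))
      = lin_shuffle_count (Nd ts) (n - Suc k)" if "k < n"
    using less.hyps[of s "Suc k"] less.prems that ts by (simp add: T_children_lin)
  show ?case
    using children_at_lin[OF less.prems(2)] card_shuffles_at[of S s "lin n" "replicate k 0"]
      subtr_valid_lin[OF less.prems(2)] less.prems S_factor T_factor ts lin_shuffle_count_Nd[of ts "n - k"]
    by (cases "k = n") (simp_all add: Suc_diff_Suc)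
qed

lemma sh_lin: "sh S (lin n) = lin_shuffle_count S n"
  using card_shuffles_at_lin[of S "[]" 0 n] by (simp add: sh_eq_card_shuffles_at)

lemma sum_atMost_power_telescope:
  "(\<Sum>j\<le>m. (of_nat j + 1) ^ Suc k - of_nat j ^ Suc k) = (of_nat m + 1 :: 'a::comm_ring_1) ^ Suc k"
  using sum_lessThan_telescope[of "\<lambda>j. of_nat j ^ Suc k :: 'a" "Suc m"]
  by (simp add: lessThan_Suc_atMost add.commute)

lemma poly_partial_sums:
  fixes q :: "'a::field_char_0 poly"
  shows "\<exists>r. degree r \<le> degree q + 1 \<and>
           coeff r (degree q + 1) = lead_coeff q / of_nat (degree q + 1) \<and>
           (\<forall>m. poly r (of_nat m) = (\<Sum>j\<le>m. poly q (of_nat j)))"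
proof (induction q rule: measure_induct_rule[where f = degree])
  case (less q)
  define d where "d = degree q"
  define c where "c = lead_coeff q / of_nat (d + 1)"
  define B :: "'a poly" where "B = [:1, 1:] ^ (d + 1) - monom 1 (d + 1)"
  have poly_B: "poly B x = (x + 1) ^ (d + 1) - x ^ (d + 1)" for x
    by (simp add: B_def poly_monom algebra_simps)
  have coeff_B: "coeff B d = of_nat (d + 1)"
    using coeff_linear_poly_power[where a = 1 and b = 1 and i = d and n = "d + 1"]
    by (simp add: B_def del: power_Suc)
  have degree_B: "degree B \<le> d"
  proof (rule degree_le, intro allI impI)
    fix i assume "d < i"
    then consider "i = d + 1" | "d + 1 < i" by linarith
    then show "coeff B i = 0"
      by cases (simp_all add: B_def coeff_linear_power coeff_eq_0 degree_linear_power)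
  qed
  \<comment> \<open>\<open>B\<close> has telescoping partial sums and leading term \<open>(d + 1) x^d\<close>, so subtracting
      \<open>c B\<close> removes the leading term of \<open>q\<close>.\<close>
  define q' where "q' = q - smult c B"
  have "coeff q' d = 0"
    using coeff_B by (simp add: q'_def c_def d_def del: of_nat_Suc)
  moreover have "degree q' \<le> d"
    unfolding q'_def d_def
    using degree_diff_le degree_smult_le degree_B d_def by (metis le_trans order.refl)
  ultimately obtain r' where r': "degree r' \<le> d" "\<And>m. poly r' (of_nat m) = (\<Sum>j\<le>m. poly q' (of_nat j))"
  proof (cases "q' = 0")
    case True
    then show ?thesis using that[of 0] by simp
  next
    case False
    with \<open>coeff q' d = 0\<close> \<open>degree q' \<le> d\<close> have "degree q' < d"
      by (metis le_neq_implies_less leading_coeff_0_iff)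
    with less[of q'] d_def obtain r' where
      "degree r' \<le> degree q' + 1" "\<forall>m. poly r' (of_nat m) = (\<Sum>j\<le>m. poly q' (of_nat j))"
      by blast
    with \<open>degree q' < d\<close> show ?thesis
      using that[of r'] by simp
  qed
  define r where "r = smult c ([:1, 1:] ^ (d + 1)) + r'"
  have "degree r \<le> d + 1"
    unfolding r_def using r'(1) degree_add_le degree_smult_le degree_linear_power
    by (metis le_SucI add.commute plus_1_eq_Suc)
  moreover have "coeff r (d + 1) = c"
    using r'(1) coeff_linear_power[of "1::'a" "d + 1"] by (simp add: r_def coeff_eq_0 del: power_Suc)
  moreover have "poly r (of_nat m) = (\<Sum>j\<le>m. poly q (of_nat j))" for m
  proof -
    have "(\<Sum>j\<le>m. poly q (of_nat j))
        = (\<Sum>j\<le>m. c * ((of_nat j + 1) ^ (d + 1) - of_nat j ^ (d + 1)) + poly q' (of_nat j))"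
      by (simp add: q'_def poly_B)
    also have "\<dots> = c * (\<Sum>j\<le>m. (of_nat j + 1) ^ (d + 1) - of_nat j ^ (d + 1))
        + (\<Sum>j\<le>m. poly q' (of_nat j))"
      by (simp add: sum.distrib sum_distrib_left)
    also have "\<dots> = c * (of_nat m + 1) ^ (d + 1) + (\<Sum>j\<le>m. poly q' (of_nat j))"
      by (simp only: Suc_eq_plus1[symmetric] sum_atMost_power_telescope)
    also have "\<dots> = poly r (of_nat m)"
      by (simp add: r_def r'(2) algebra_simps)
    finally show ?thesis by simp
  qed
  ultimately show ?case
    unfolding c_def d_def by blast
qed

lemma poly_partial_sums_nonzero:
  fixes q :: "'a::field_char_0 poly"
  assumes "q \<noteq> 0"
  obtains r where "degree r = degree q + 1" "lead_coeff r = lead_coeff q / of_nat (degree q + 1)"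
    "\<And>m. poly r (of_nat m) = (\<Sum>j\<le>m. poly q (of_nat j))"
proof -
  obtain r where r: "degree r \<le> degree q + 1"
      "coeff r (degree q + 1) = lead_coeff q / of_nat (degree q + 1)"
      "\<forall>m. poly r (of_nat m) = (\<Sum>j\<le>m. poly q (of_nat j))"
    using poly_partial_sums[of q] by blast
  have "coeff r (degree q + 1) \<noteq> 0"
    using r(2) assms
    by (metis divide_eq_0_iff leading_coeff_0_iff of_nat_eq_0_iff add_eq_0_iff_both_eq_0 one_neq_zero)
  then have "degree r = degree q + 1"
    using r(1) le_degree by (metis le_antisym)
  with r that show ?thesis
    by simp
qed

lemma tfact_neq_0: "tfact S \<noteq> 0"
  by (induction S) (fastforce simp: prod_list_zero_iff)

lemma prod_list_tfact_neq_0: "(\<Prod>t\<leftarrow>ts. tfact t) \<noteq> 0"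
  by (simp add: prod_list_zero_iff tfact_neq_0 image_iff)

lemma prod_list_lin_shuffle_count_poly:
  fixes Q :: "ptree \<Rightarrow> rat poly"
  assumes "\<And>t. t \<in> set ts \<Longrightarrow> degree (Q t) = nverts t \<and> lead_coeff (Q t) = 1 / of_nat (tfact t) \<and>
     (\<forall>m. poly (Q t) (of_nat m) = of_nat (lin_shuffle_count t m))"
  shows "degree (\<Prod>t\<leftarrow>ts. Q t) = (\<Sum>t\<leftarrow>ts. nverts t) \<and>
    lead_coeff (\<Prod>t\<leftarrow>ts. Q t) = 1 / of_nat (\<Prod>t\<leftarrow>ts. tfact t) \<and>
    (\<forall>m. poly (\<Prod>t\<leftarrow>ts. Q t) (of_nat m) = of_nat (\<Prod>t\<leftarrow>ts. lin_shuffle_count t m))"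
  using assms
proof (induction ts)
  case (Cons a ts)
  let ?P = "\<Prod>t\<leftarrow>ts. Q t"
  have P: "degree ?P = (\<Sum>t\<leftarrow>ts. nverts t)" "lead_coeff ?P = 1 / of_nat (\<Prod>t\<leftarrow>ts. tfact t)"
    "\<forall>m. poly ?P (of_nat m) = of_nat (\<Prod>t\<leftarrow>ts. lin_shuffle_count t m)"
    using Cons.IH Cons.prems by (meson list.set_intros(2))+
  have a: "degree (Q a) = nverts a" "lead_coeff (Q a) = 1 / of_nat (tfact a)"
    "\<forall>m. poly (Q a) (of_nat m) = of_nat (lin_shuffle_count a m)"
    using Cons.prems[of a] by (meson list.set_intros(1))+
  have "lead_coeff (Q a) \<noteq> 0" "lead_coeff ?P \<noteq> 0"
    using a(2) P(2) tfact_neq_0[of a] prod_list_tfact_neq_0[of ts] by simp_all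
  then have "Q a \<noteq> 0" "?P \<noteq> 0"
    by auto
  then have "degree (Q a * ?P) = degree (Q a) + degree ?P"
    by (rule degree_mult_eq)
  moreover have "lead_coeff (Q a * ?P) = lead_coeff (Q a) * lead_coeff ?P"
    by (rule lead_coeff_mult)
  ultimately show ?case
    using a P by simp
qed simp

lemma lin_shuffle_count_poly:
  "\<exists>p :: rat poly. degree p = nverts S \<and> lead_coeff p = 1 / of_nat (tfact S) \<and>
     (\<forall>m. poly p (of_nat m) = of_nat (lin_shuffle_count S m))"
proof (induction S)
  case (Nd ts)
  show ?case
  proof (cases "ts = []")
    case True
    then show ?thesis by (intro exI[of _ 1]) simp
  next
    case False
    from Nd.IH obtain Q :: "ptree \<Rightarrow> rat poly" where "\<And>t. t \<in> set ts \<Longrightarrow>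
        degree (Q t) = nverts t \<and> lead_coeff (Q t) = 1 / of_nat (tfact t) \<and>
        (\<forall>m. poly (Q t) (of_nat m) = of_nat (lin_shuffle_count t m))"
      by metis
    from prod_list_lin_shuffle_count_poly[OF this] obtain q :: "rat poly" where
      q: "degree q = (\<Sum>t\<leftarrow>ts. nverts t)" "lead_coeff q = 1 / of_nat (\<Prod>t\<leftarrow>ts. tfact t)"
        "\<forall>m. poly q (of_nat m) = of_nat (\<Prod>t\<leftarrow>ts. lin_shuffle_count t m)"
      by blast
    have "q \<noteq> 0"
      using q(2) prod_list_tfact_neq_0[of ts] by auto
    then obtain r where r: "degree r = degree q + 1"
        "lead_coeff r = lead_coeff q / of_nat (degree q + 1)"
        "\<And>m. poly r (of_nat m) = (\<Sum>j\<le>m. poly q (of_nat j))"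
      using poly_partial_sums_nonzero by blast
    show ?thesis
    proof (intro exI[of _ r] conjI allI)
      show "degree r = nverts (Nd ts)"
        using r(1) q(1) False by simp
      show "lead_coeff r = 1 / of_nat (tfact (Nd ts))"
        using r(2) False unfolding q(2) unfolding q(1)
        by (simp add: divide_divide_eq_left algebra_simps)
      show "poly r (of_nat m) = of_nat (lin_shuffle_count (Nd ts) m)" for m
        using False r(3) q(3) by simp
    qed
  qed
qed

theorem mainTheorem6:
  fixes S :: ptree
  shows "\<exists>p :: rat poly. degree p = nverts S \<and>
           lead_coeff p = 1 / of_nat (tfact S) \<and>
           (\<forall>n::nat. poly p (of_nat n) = of_nat (sh S (lin n)))"
  using lin_shuffle_count_poly[of S] by (simp add: sh_lin)

end
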